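(* There exists $K_0<\infty$ such that for every $K\in[K_0,\infty)$, every minimizer of $\mathcal{L}_K$ on $M_K$ is a non-constant function.
   Context: Fix $p>2$, $1<q<p$, $\sigma^2>0$. For $K\in(0,\infty)$, $I_K=(-K,K]$ and functions on $I_K$ are identified with $2K$-periodic functions on $\mathbb{R}$; $\|\cdot\|_{r,I_K}$ is the $L^r$ norm over $I_K$. $(\mathcal{A}W)(\varphi)=\int_{\varphi-1/2}^{\varphi+1/2}W(s)\,ds$. $X_K=\{W\in L^2(I_K):\mathcal{A}W\in L^q(I_K)\cap L^p(I_K)\}$, $\mathcal{Q}_K(W)=\int_{I_K}|\mathcal{A}W|^q$, $\mathcal{P}_K(W)=\int_{I_K}|\mathcal{A}W|^p$, $\mathcal{L}_K(W)=\tfrac12\sigma^2\|W\|_{2,I_K}^2+\mathcal{Q}_K(W)-\mathcal{P}_K(W)$, $\mathcal{F}_K(W)=\sigma^2\|W\|_{2,I_K}^2+q\mathcal{Q}_K(W)-p\mathcal{P}_K(W)$, $M_K=\{W\in X_K:W\ne0,\ \mathcal{F}_K(W)=0\}$. *)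

theory Defs
  imports "HOL-Analysis.Analysis"
begin

text \<open>Functions on I_K = (-K,K] are represented as 2K-periodic real functions on the real line.\<close>

definition IK :: "real \<Rightarrow> real set" where
  "IK K = {-K<..K}"

definition avgop :: "(real \<Rightarrow> real) \<Rightarrow> real \<Rightarrow> real" where
  "avgop W \<phi> = (LBINT s:{\<phi> - 1/2 .. \<phi> + 1/2}. W s)"

definition L2sq :: "real \<Rightarrow> (real \<Rightarrow> real) \<Rightarrow> real" where
  "L2sq K W = (LBINT x:IK K. (W x)\<^sup>2)"

definition XK :: "real \<Rightarrow> real \<Rightarrow> real \<Rightarrow> (real \<Rightarrow> real) set" where
  "XK p q K = {W. (\<forall>x. W (x + 2 * K) = W x) \<and> W \<in> borel_measurable lborel
      \<and> set_integrable lborel (IK K) (\<lambda>x. (W x)\<^sup>2)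
      \<and> set_integrable lborel (IK K) (\<lambda>x. \<bar>avgop W x\<bar> powr q)
      \<and> set_integrable lborel (IK K) (\<lambda>x. \<bar>avgop W x\<bar> powr p)}"

definition QK :: "real \<Rightarrow> real \<Rightarrow> (real \<Rightarrow> real) \<Rightarrow> real" where
  "QK q K W = (LBINT x:IK K. \<bar>avgop W x\<bar> powr q)"

definition PK :: "real \<Rightarrow> real \<Rightarrow> (real \<Rightarrow> real) \<Rightarrow> real" where
  "PK p K W = (LBINT x:IK K. \<bar>avgop W x\<bar> powr p)"

definition LK :: "real \<Rightarrow> real \<Rightarrow> real \<Rightarrow> real \<Rightarrow> (real \<Rightarrow> real) \<Rightarrow> real" where
  "LK \<sigma>2 p q K W = 1/2 * \<sigma>2 * L2sq K W + QK q K W - PK p K W"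

definition FK :: "real \<Rightarrow> real \<Rightarrow> real \<Rightarrow> real \<Rightarrow> (real \<Rightarrow> real) \<Rightarrow> real" where
  "FK \<sigma>2 p q K W = \<sigma>2 * L2sq K W + q * QK q K W - p * PK p K W"

text \<open>W \<noteq> 0 as an element of L^2(I_K): not almost everywhere zero on I_K.\<close>
definition MK :: "real \<Rightarrow> real \<Rightarrow> real \<Rightarrow> real \<Rightarrow> (real \<Rightarrow> real) set" where
  "MK \<sigma>2 p q K = {W \<in> XK p q K. \<not> (AE x in lborel. x \<in> IK K \<longrightarrow> W x = 0)
                                  \<and> FK \<sigma>2 p q K W = 0}"

definition is_minimizer_on_MK :: "real \<Rightarrow> real \<Rightarrow> real \<Rightarrow> real \<Rightarrow> (real \<Rightarrow> real) \<Rightarrow> bool" where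
  "is_minimizer_on_MK \<sigma>2 p q K W \<longleftrightarrow>
     W \<in> MK \<sigma>2 p q K \<and> (\<forall>V \<in> MK \<sigma>2 p q K. LK \<sigma>2 p q K W \<le> LK \<sigma>2 p q K V)"

text \<open>Constant as an element of L^2(I_K): almost everywhere equal to a constant on I_K.\<close>
definition ae_constant_on_IK :: "real \<Rightarrow> (real \<Rightarrow> real) \<Rightarrow> bool" where
  "ae_constant_on_IK K W \<longleftrightarrow> (\<exists>c. AE x in lborel. x \<in> IK K \<longrightarrow> W x = c)"

end

theory Submission imports Defs begin

(* Compare the energy L_K of constant elements of the Nehari set M_K with that
   of one fixed competitor.
   (1) If W in M_K is a.e. equal to a constant c on I_K, then A W = c on I_K, so every
       functional is |I_K| = 2K times its value at c.  The constraint F_K(W) = 0 forces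
       |c|^(p-2) >= sigma^2/p, and then p L_K(W) >= (p/2 - 1) sigma^2 2K (sigma^2/p)^(2/(p-2)):
       the energy of constants in M_K grows linearly in K.
   (2) The 2K-periodic bump s * 1[-1/2,1/2] has, for K > 1, an average A W = s * tent that
       does not feel the periodization, so all its functionals are independent of K.
       Choosing the amplitude s by the intermediate value theorem puts it on M_K, with an
       energy C independent of K.
   A minimizer has energy <= C, so for K > p|C| / (linear growth rate) it is not constant. *)

section \<open>Constant elements of the Nehari set\<close>

lemma AE_lborel_translate:
  fixes P :: "real \<Rightarrow> bool"
  assumes "AE x in lborel. P x" "{x. P x} \<in> sets borel"
  shows "AE x in lborel. P (a + x)"
proof -
  have "AE x in distr lborel borel ((+) a). P x" using assms(1) unfolding lborel_distr_plus .
  then show ?thesis using assms(2) by (subst (asm) AE_distr_iff) auto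
qed

text \<open>A 2K-periodic function that is a.e. equal to c on I_K has average exactly c at every
  point of I_K: the window of length 1 is covered by I_K and its two translates.\<close>
lemma avgop_ae_constant:
  assumes per: "\<And>y. W (y + 2 * K) = W y" and [measurable]: "W \<in> borel_measurable borel"
    and K: "K > 1/4" and ae: "AE y in lborel. y \<in> IK K \<longrightarrow> W y = c" and x: "x \<in> IK K"
  shows "avgop W x = c"
proof -
  have ms: "{y. y \<in> IK K \<longrightarrow> W y = c} \<in> sets borel" unfolding IK_def by measurable
  have right: "AE y in lborel. 2*K + y \<in> IK K \<longrightarrow> W (2*K + y) = c"
    and left: "AE y in lborel. -2*K + y \<in> IK K \<longrightarrow> W (-2*K + y) = c"
    by (rule AE_lborel_translate[OF ae ms])+
  have "AE y in lborel. y \<in> {x-1/2..x+1/2} \<longrightarrow> W y = c"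
    using right left ae
  proof eventually_elim
    case (elim y)
    have shift: "W (2*K + y) = W y" "W (-2*K + y) = W y"
      using per[of y] per[of "-2*K + y"] by (simp_all add: add.commute)
    consider "y \<le> -K" | "y \<in> IK K" | "y > K" by (force simp: IK_def)
    then show ?case
    proof cases
      case 1
      then show ?thesis using elim shift x K by (auto simp: IK_def)
    next
      case 3
      then show ?thesis using elim shift x K by (auto simp: IK_def)
    qed (use elim in auto)
  qed
  then have "avgop W x = (LBINT y:{x-1/2..x+1/2}. c)"
    unfolding avgop_def by (intro set_lebesgue_integral_cong_AE) auto
  also have "\<dots> = c" by (simp add: set_integral_const)
  finally show ?thesis .
qed

lemma set_integral_IK_const:
  assumes "K > 0" shows "(LBINT x:IK K. c) = 2 * K * c"
  using assms unfolding IK_def by (simp add: set_integral_const)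

lemma functionals_of_constant:
  assumes W: "W \<in> XK p q K" and K: "K > 1/4"
    and ae: "AE x in lborel. x \<in> IK K \<longrightarrow> W x = c"
  shows "L2sq K W = 2 * K * c\<^sup>2" "QK q K W = 2 * K * \<bar>c\<bar> powr q" "PK p K W = 2 * K * \<bar>c\<bar> powr p"
proof -
  have per: "\<And>y. W (y + 2 * K) = W y" and [measurable]: "W \<in> borel_measurable borel"
    using W unfolding XK_def by auto
  have avg: "\<And>x. x \<in> IK K \<Longrightarrow> avgop W x = c"
    using avgop_ae_constant[OF per _ K ae] by simp
  have sIK: "IK K \<in> sets lborel" unfolding IK_def by simp
  have "L2sq K W = (LBINT x:IK K. c\<^sup>2)"
    unfolding L2sq_def using ae
    by (intro set_lebesgue_integral_cong_AE) (auto simp: IK_def elim: AE_mp)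
  then show "L2sq K W = 2 * K * c\<^sup>2" using K by (simp add: set_integral_IK_const)
  have "QK q K W = (LBINT x:IK K. \<bar>c\<bar> powr q)"
    unfolding QK_def using avg sIK by (intro set_lebesgue_integral_cong) auto
  then show "QK q K W = 2 * K * \<bar>c\<bar> powr q" using K by (simp add: set_integral_IK_const)
  have "PK p K W = (LBINT x:IK K. \<bar>c\<bar> powr p)"
    unfolding PK_def using avg sIK by (intro set_lebesgue_integral_cong) auto
  then show "PK p K W = 2 * K * \<bar>c\<bar> powr p" using K by (simp add: set_integral_IK_const)
qed

lemma nehari_amplitude_lower_bound:
  fixes a p q \<sigma>2 :: real
  assumes p: "p > 2" and q: "q \<ge> 0" and s: "\<sigma>2 > 0" and a: "a > 0"
    and eq: "\<sigma>2 * a\<^sup>2 + q * a powr q = p * a powr p"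
  shows "(\<sigma>2/p) powr (2/(p-2)) \<le> a\<^sup>2"
proof -
  have sq: "a\<^sup>2 = a powr 2" using a by (simp add: powr_numeral)
  have "a powr p = a powr 2 * a powr (p-2)" by (simp flip: powr_add)
  then have "\<sigma>2 * a powr 2 \<le> p * (a powr 2 * a powr (p-2))"
    using eq sq q by (smt (verit) mult_nonneg_nonneg powr_ge_zero)
  then have "\<sigma>2/p \<le> a powr (p-2)" using a p by (simp add: field_simps)
  then have "(\<sigma>2/p) powr (2/(p-2)) \<le> (a powr (p-2)) powr (2/(p-2))"
    using p s by (intro powr_mono2) auto
  also have "\<dots> = a powr ((p-2) * (2/(p-2)))" by (simp only: powr_powr)
  also have "(p-2) * (2/(p-2)) = 2" using p by (simp add: field_simps)
  finally show ?thesis using sq by simp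
qed

lemma constant_energy_lower_bound:
  fixes p q \<sigma>2 K :: real
  assumes p: "p > 2" and q: "1 < q" "q < p" and s: "\<sigma>2 > 0" and K: "K > 1/4"
    and W: "W \<in> MK \<sigma>2 p q K" and cst: "ae_constant_on_IK K W"
  shows "(p/2 - 1) * \<sigma>2 * (2*K) * (\<sigma>2/p) powr (2/(p-2)) \<le> p * LK \<sigma>2 p q K W"
proof -
  obtain c where ae: "AE x in lborel. x \<in> IK K \<longrightarrow> W x = c"
    using cst unfolding ae_constant_on_IK_def by auto
  have WX: "W \<in> XK p q K" and nz: "\<not> (AE x in lborel. x \<in> IK K \<longrightarrow> W x = 0)"
    and F: "FK \<sigma>2 p q K W = 0" using W unfolding MK_def by auto
  note constant_values = functionals_of_constant[OF WX K ae]
  have c: "\<bar>c\<bar> > 0" using nz ae by auto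
  have "2*K * (\<sigma>2 * \<bar>c\<bar>\<^sup>2 + q * \<bar>c\<bar> powr q - p * \<bar>c\<bar> powr p) = 0"
    using F constant_values unfolding FK_def by (simp add: algebra_simps)
  then have nehari: "\<sigma>2 * \<bar>c\<bar>\<^sup>2 + q * \<bar>c\<bar> powr q = p * \<bar>c\<bar> powr p" using K by simp
  have bound: "(\<sigma>2/p) powr (2/(p-2)) \<le> c\<^sup>2"
    using nehari_amplitude_lower_bound[OF p _ s c nehari] q by simp
  text \<open>Eliminating the p-term via the constraint leaves only nonnegative contributions.\<close>
  have "p * LK \<sigma>2 p q K W = p/2 * \<sigma>2 * (2*K) * c\<^sup>2 + p * (2*K * \<bar>c\<bar> powr q) - 2*K * (p * \<bar>c\<bar> powr p)"
    unfolding LK_def constant_values by (simp add: algebra_simps)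
  also have "\<dots> = (p/2 - 1) * \<sigma>2 * (2*K) * c\<^sup>2 + (p - q) * (2*K * \<bar>c\<bar> powr q)"
    unfolding nehari[symmetric] by (simp add: algebra_simps)
  also have "\<dots> \<ge> (p/2 - 1) * \<sigma>2 * (2*K) * c\<^sup>2" using q K by simp
  finally have "(p/2 - 1) * \<sigma>2 * (2*K) * c\<^sup>2 \<le> p * LK \<sigma>2 p q K W" .
  moreover have "(p/2 - 1) * \<sigma>2 * (2*K) \<ge> 0" using p s K by simp
  ultimately show ?thesis using mult_left_mono[OF bound] by (smt (verit))
qed

section \<open>A competitor with energy independent of K\<close>

definition bump_support :: "real \<Rightarrow> real set" where
  "bump_support K = (\<Union>n::int. {2*K*n - 1/2 .. 2*K*n + 1/2})"

definition bump :: "real \<Rightarrow> real \<Rightarrow> real \<Rightarrow> real" where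
  "bump s K x = s * indicator (bump_support K) x"

text \<open>The tent function; it is the average of the indicator of [-1/2, 1/2].\<close>
definition tent :: "real \<Rightarrow> real" where
  "tent x = max 0 (1 - \<bar>x\<bar>)"

lemma bump_support_local:
  assumes K: "K > 1" and x: "\<bar>x\<bar> \<le> K + 1/2"
  shows "x \<in> bump_support K \<longleftrightarrow> \<bar>x\<bar> \<le> 1/2"
proof
  assume "\<bar>x\<bar> \<le> 1/2"
  then have "x \<in> {2*K*real_of_int 0 - 1/2 .. 2*K*real_of_int 0 + 1/2}" by auto
  then show "x \<in> bump_support K" unfolding bump_support_def by blast
next
  assume "x \<in> bump_support K"
  then obtain n :: int where n: "x \<in> {2*K*n - 1/2 .. 2*K*n + 1/2}"
    unfolding bump_support_def by blast
  show "\<bar>x\<bar> \<le> 1/2"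
  proof (cases "n = 0")
    case False
    then have "2*K*1 \<le> 2*K*\<bar>real_of_int n\<bar>" using K by (intro mult_left_mono) auto
    then have "2*K \<le> \<bar>2*K*real_of_int n\<bar>" using K by (simp add: abs_mult)
    then show ?thesis using n x K by auto
  qed (use n in auto)
qed

lemma bump_support_periodic: "x + 2*K \<in> bump_support K \<longleftrightarrow> x \<in> bump_support K"
proof
  assume "x + 2*K \<in> bump_support K"
  then obtain n :: int where "x + 2*K \<in> {2*K*n - 1/2 .. 2*K*n + 1/2}"
    unfolding bump_support_def by blast
  then have "x \<in> {2*K*real_of_int (n-1) - 1/2 .. 2*K*real_of_int (n-1) + 1/2}"
    by (auto simp: algebra_simps)
  then show "x \<in> bump_support K" unfolding bump_support_def by blast
next
  assume "x \<in> bump_support K"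
  then obtain n :: int where "x \<in> {2*K*n - 1/2 .. 2*K*n + 1/2}"
    unfolding bump_support_def by blast
  then have "x + 2*K \<in> {2*K*real_of_int (n+1) - 1/2 .. 2*K*real_of_int (n+1) + 1/2}"
    by (auto simp: algebra_simps)
  then show "x + 2*K \<in> bump_support K" unfolding bump_support_def by blast
qed

lemma bump_measurable[measurable]: "bump s K \<in> borel_measurable borel"
proof -
  have "bump_support K \<in> sets borel"
    unfolding bump_support_def by (intro sets.countable_UN') auto
  then show ?thesis unfolding bump_def by measurable
qed

lemma bump_periodic: "bump s K (x + 2*K) = bump s K x"
  unfolding bump_def using bump_support_periodic by (simp add: indicator_def)

lemma bump_local:
  assumes "K > 1" "\<bar>x\<bar> \<le> K + 1/2"
  shows "bump s K x = s * indicator {-1/2..1/2} x"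
  unfolding bump_def using bump_support_local[OF assms] by (auto simp: indicator_def abs_le_iff)

lemma measure_window_overlap:
  "measure lborel ({x-1/2..x+1/2} \<inter> {-1/2..1/2::real}) = tent x"
proof -
  have e: "{x-1/2..x+1/2} \<inter> {-1/2..1/2::real} = {max (x-1/2) (-1/2) .. min (x+1/2) (1/2)}"
    by auto
  show ?thesis
  proof (cases "max (x-1/2) (-1/2) \<le> min (x+1/2) (1/2)")
    case True
    then show ?thesis unfolding e tent_def by (auto simp: max_def min_def abs_if)
  next
    case False
    then have "\<bar>x\<bar> \<ge> 1" unfolding max_def min_def by (auto split: if_splits)
    then show ?thesis using False unfolding e tent_def by auto
  qed
qed

lemma avgop_bump:
  assumes K: "K > 1" and x: "x \<in> IK K"
  shows "avgop (bump s K) x = s * tent x"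
proof -
  have "avgop (bump s K) x = (LBINT y:{x-1/2..x+1/2}. s * indicator {-1/2..1/2} y)"
    unfolding avgop_def
  proof (intro set_lebesgue_integral_cong allI impI)
    fix y assume "y \<in> {x-1/2..x+1/2}"
    then have "\<bar>y\<bar> \<le> K + 1/2" using x unfolding IK_def by auto
    then show "bump s K y = s * indicator {-1/2..1/2} y" by (rule bump_local[OF K])
  qed simp
  also have "\<dots> = s * (LINT y|lborel. indicator ({x-1/2..x+1/2} \<inter> {-1/2..1/2}) y)"
  proof -
    have "(\<lambda>y. indicator {x-1/2..x+1/2} y *\<^sub>R (s * indicator {-1/2..1/2} y))
       = (\<lambda>y. s * indicator ({x-1/2..x+1/2} \<inter> {-1/2..1/2::real}) y)"
      by (auto simp: indicator_def fun_eq_iff)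
    then show ?thesis unfolding set_lebesgue_integral_def by simp
  qed
  also have "\<dots> = s * tent x" using measure_window_overlap by simp
  finally show ?thesis .
qed

lemma set_integral_indicator_transfer:
  fixes f g :: "real \<Rightarrow> real"
  assumes "\<And>x. indicator A x * f x = indicator B x * g x"
  shows "set_integrable lborel A f = set_integrable lborel B g"
    and "(LBINT x:A. f x) = (LBINT x:B. g x)"
proof -
  have e: "(\<lambda>x. indicator A x *\<^sub>R f x) = (\<lambda>x. indicator B x *\<^sub>R g x)"
    using assms by (simp add: fun_eq_iff)
  show "set_integrable lborel A f = set_integrable lborel B g"
    unfolding set_integrable_def e ..
  show "(LBINT x:A. f x) = (LBINT x:B. g x)"
    unfolding set_lebesgue_integral_def e ..
qed

definition tent_moment :: "real \<Rightarrow> real" where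
  "tent_moment r = (LBINT x:{-1..1}. tent x powr r)"

lemma tent_nonneg: "tent x \<ge> 0"
  unfolding tent_def by simp

lemma tent_continuous: "continuous_on S tent"
  unfolding tent_def by (intro continuous_intros)

lemma tent_moment_integrable:
  "r > 0 \<Longrightarrow> set_integrable lborel {-1..1} (\<lambda>x. tent x powr r)"
  unfolding set_integrable_def
  by (rule borel_integrable_compact)
    (auto intro!: continuous_on_powr' tent_continuous continuous_on_const simp: tent_nonneg)

lemma tent_moment_nonneg: "tent_moment r \<ge> 0"
  unfolding tent_moment_def set_lebesgue_integral_def
  by (intro Bochner_Integration.integral_nonneg) (auto simp: indicator_def)

text \<open>Positivity: tent >= 1/2 on [-1/2, 1/2].\<close>
lemma tent_moment_pos:
  assumes r: "r > 0" shows "tent_moment r > 0"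
proof -
  have i1: "integrable lborel (\<lambda>x::real. indicator {-1/2..1/2::real} x * ((1/2::real) powr r))"
    using borel_integrable_compact[of "{-1/2..1/2::real}" "\<lambda>_. (1/2) powr r"] by simp
  have i2: "integrable lborel (\<lambda>x. indicator {-1..1} x * (tent x powr r))"
    using tent_moment_integrable[OF r] unfolding set_integrable_def by simp
  have "(1/2) powr r = (LINT x|lborel. indicator {-1/2..1/2::real} x * ((1/2::real) powr r))"
    by simp
  also have "\<dots> \<le> (LINT x|lborel. indicator {-1..1} x * (tent x powr r))"
  proof (rule integral_mono[OF i1 i2])
    fix x :: real
    show "indicator {-1/2..1/2::real} x * ((1/2::real) powr r) \<le> indicator {-1..1} x * (tent x powr r)"
    proof (cases "x \<in> {-1/2..1/2}")
      case True
      then have "1/2 \<le> tent x" unfolding tent_def by auto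
      then have "(1/2) powr r \<le> tent x powr r" using r by (intro powr_mono2) auto
      then show ?thesis using True by auto
    qed (auto simp: tent_def)
  qed
  also have "\<dots> = tent_moment r" unfolding tent_moment_def set_lebesgue_integral_def by simp
  finally have "(1/2) powr r \<le> tent_moment r" .
  moreover have "(1/2::real) powr r > 0" by simp
  ultimately show ?thesis by linarith
qed

lemma bump_power_functional:
  assumes K: "K > 1" and s: "s > 0" and r: "r > 0"
  shows "set_integrable lborel (IK K) (\<lambda>x. \<bar>avgop (bump s K) x\<bar> powr r)"
    and "(LBINT x:IK K. \<bar>avgop (bump s K) x\<bar> powr r) = s powr r * tent_moment r"
proof -
  have pw: "indicator (IK K) x * (\<bar>avgop (bump s K) x\<bar> powr r)
            = indicator {-1..1} x * (s powr r * tent x powr r)" for x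
  proof (cases "x \<in> IK K")
    case True
    have "\<bar>avgop (bump s K) x\<bar> powr r = s powr r * tent x powr r"
      using avgop_bump[OF K True] s by (simp add: abs_mult powr_mult tent_def)
    then show ?thesis using True by (cases "x \<in> {-1..1}") (auto simp: tent_def)
  next
    case False
    then have "x \<notin> {-1..1}" using K unfolding IK_def by auto
    then show ?thesis using False by simp
  qed
  show "set_integrable lborel (IK K) (\<lambda>x. \<bar>avgop (bump s K) x\<bar> powr r)"
    using set_integral_indicator_transfer(1)[OF pw] tent_moment_integrable[OF r] by simp
  show "(LBINT x:IK K. \<bar>avgop (bump s K) x\<bar> powr r) = s powr r * tent_moment r"
    unfolding set_integral_indicator_transfer(2)[OF pw] tent_moment_def by simp
qed

lemma bump_L2:
  assumes K: "K > 1"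
  shows "set_integrable lborel (IK K) (\<lambda>x. (bump s K x)\<^sup>2)"
    and "L2sq K (bump s K) = s\<^sup>2"
proof -
  have pw: "indicator (IK K) x * (bump s K x)\<^sup>2 = indicator {-1/2..1/2} x * s\<^sup>2" for x
  proof (cases "x \<in> IK K")
    case True
    then have "\<bar>x\<bar> \<le> K + 1/2" unfolding IK_def by auto
    then show ?thesis using True bump_local[OF K] by (simp add: indicator_def)
  next
    case False
    then have "x \<notin> {-1/2..1/2}" using K unfolding IK_def by auto
    then show ?thesis using False by simp
  qed
  have "set_integrable lborel {-1/2..1/2} (\<lambda>x::real. s\<^sup>2)"
    unfolding set_integrable_def
    using borel_integrable_compact[of "{-1/2..1/2::real}" "\<lambda>_. s\<^sup>2"] by simp
  then show "set_integrable lborel (IK K) (\<lambda>x. (bump s K x)\<^sup>2)"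
    using set_integral_indicator_transfer(1)[OF pw] by simp
  show "L2sq K (bump s K) = s\<^sup>2"
    unfolding L2sq_def set_integral_indicator_transfer(2)[OF pw] by (simp add: set_integral_const)
qed

text \<open>Scaling onto the Nehari set.  The fibering function f(s) = a s^2 + q b s^q - p d s^p
  is nonnegative at the point s1 where a s^2 = p d s^p.\<close>
lemma fibering_nonneg_point:
  fixes a b d p q :: real
  assumes a: "a > 0" and b: "b \<ge> 0" and d: "d > 0" and p: "p > 2" and q: "q > 0"
  defines "s1 \<equiv> (a/(p*d)) powr (1/(p-2))"
  shows "s1 > 0" and "a * s1\<^sup>2 + q * b * s1 powr q - p * d * s1 powr p \<ge> 0"
proof -
  show s1: "s1 > 0" unfolding s1_def using a p d by simp
  have "s1 powr (p-2) = (a/(p*d)) powr ((1/(p-2)) * (p-2))"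
    unfolding s1_def by (simp only: powr_powr)
  then have e: "s1 powr (p-2) = a/(p*d)" using a p d by simp
  have "p * d * s1 powr p = p * d * (s1 powr 2 * s1 powr (p-2))" by (simp flip: powr_add)
  also have "\<dots> = a * s1\<^sup>2" using e s1 p d by (simp add: field_simps powr_numeral)
  finally show "a * s1\<^sup>2 + q * b * s1 powr q - p * d * s1 powr p \<ge> 0" using q b by simp
qed

text \<open>The fibering function is nonpositive for all large s, since p exceeds both 2 and q:
  the term s^p dominates s^(max 2 q).\<close>
lemma fibering_nonpos_large:
  fixes a b d p q s :: real
  assumes a: "a > 0" and b: "b \<ge> 0" and d: "d > 0" and p: "p > 2" and q: "0 < q" "q < p"
  defines "m \<equiv> max 2 q"
  assumes s: "s \<ge> 1" "s \<ge> ((a + q*b)/(p*d)) powr (1/(p-m))"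
  shows "a * s\<^sup>2 + q * b * s powr q - p * d * s powr p \<le> 0"
proof -
  have m: "m < p" "2 \<le> m" "q \<le> m" unfolding m_def using p q by auto
  have "(a + q*b)/(p*d) = (((a + q*b)/(p*d)) powr (1/(p-m))) powr (p-m)"
    using m a b d p q by (simp add: powr_powr)
  also have "\<dots> \<le> s powr (p-m)" using s m by (intro powr_mono2) auto
  finally have large: "a + q*b \<le> p * d * s powr (p-m)" using p d by (simp add: field_simps)
  have "s\<^sup>2 \<le> s powr m" using s m powr_mono[of 2 m s] by (simp add: powr_numeral)
  moreover have "s powr q \<le> s powr m" using s m by (simp add: powr_mono)
  ultimately have "a * s\<^sup>2 + q * b * s powr q - p * d * s powr p
      \<le> a * s powr m + q * b * s powr m - p * d * s powr p"
    using a q b by (smt (verit) mult_left_mono mult_nonneg_nonneg)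
  also have "\<dots> = s powr m * ((a + q*b) - p * d * s powr (p-m))"
    using s by (simp add: algebra_simps flip: powr_add)
  also have "\<dots> \<le> 0" using large by (simp add: mult_nonneg_nonpos)
  finally show ?thesis .
qed

lemma fibering_root:
  fixes a b d p q :: real
  assumes a: "a > 0" and b: "b \<ge> 0" and d: "d > 0" and p: "p > 2" and q: "0 < q" "q < p"
  shows "\<exists>s>0. a * s\<^sup>2 + q * b * s powr q - p * d * s powr p = 0"
proof -
  define f where "f s = a * s\<^sup>2 + q * b * s powr q - p * d * s powr p" for s
  obtain s1 where s1: "s1 > 0" "f s1 \<ge> 0"
    using fibering_nonneg_point[OF a b d p q(1)] unfolding f_def by blast
  define s2 where "s2 = max s1 (max 1 (((a + q*b)/(p*d)) powr (1/(p - max 2 q))))"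
  have f2: "f s2 \<le> 0"
    unfolding f_def by (rule fibering_nonpos_large[OF a b d p q]) (auto simp: s2_def)
  have "continuous_on {s1..s2} f"
    unfolding f_def using s1 by (intro continuous_intros continuous_on_powr') auto
  then obtain s where "s1 \<le> s" "s \<le> s2" "f s = 0"
    using IVT2'[of f s2 0 s1] s1 f2 by (auto simp: s2_def)
  then show ?thesis using s1 unfolding f_def by (intro exI[of _ s]) auto
qed

lemma bump_in_nehari_set:
  fixes p q \<sigma>2 :: real
  assumes p: "p > 2" and q: "1 < q" "q < p" and K: "K > 1" and s: "s > 0"
    and F: "\<sigma>2 * s\<^sup>2 + q * (s powr q * tent_moment q) - p * (s powr p * tent_moment p) = 0"
  shows "bump s K \<in> MK \<sigma>2 p q K"
    and "LK \<sigma>2 p q K (bump s K) = 1/2 * \<sigma>2 * s\<^sup>2 + s powr q * tent_moment q - s powr p * tent_moment p"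
proof -
  have "q > 0" "p > 0" using p q by auto
  note Q = bump_power_functional[OF K s \<open>q > 0\<close>] and P = bump_power_functional[OF K s \<open>p > 0\<close>]
  have X: "bump s K \<in> XK p q K"
    unfolding XK_def using bump_periodic bump_L2(1)[OF K] Q(1) P(1)
    by (auto simp: measurable_lborel1)
  have nz: "\<not> (AE x in lborel. x \<in> IK K \<longrightarrow> bump s K x = 0)"
  proof
    assume "AE x in lborel. x \<in> IK K \<longrightarrow> bump s K x = 0"
    then have "L2sq K (bump s K) = (LBINT x:IK K. 0)"
      unfolding L2sq_def by (intro set_lebesgue_integral_cong_AE) (auto simp: IK_def elim: AE_mp)
    then show False using bump_L2(2)[OF K] s by simp
  qed
  have "FK \<sigma>2 p q K (bump s K) = 0"
    unfolding FK_def QK_def PK_def bump_L2(2)[OF K] Q(2) P(2) using F p q by simp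
  then show "bump s K \<in> MK \<sigma>2 p q K" unfolding MK_def using X nz by auto
  show "LK \<sigma>2 p q K (bump s K) = 1/2 * \<sigma>2 * s\<^sup>2 + s powr q * tent_moment q - s powr p * tent_moment p"
    unfolding LK_def QK_def PK_def bump_L2(2)[OF K] Q(2) P(2) using p q by simp
qed

theorem corollary12:
  fixes p q \<sigma>2 :: real
  assumes "p > 2" and "1 < q" and "q < p" and "\<sigma>2 > 0"
  shows "\<exists>K0::real. \<forall>K. K0 \<le> K \<and> 0 < K \<longrightarrow>
           (\<forall>W. is_minimizer_on_MK \<sigma>2 p q K W \<longrightarrow> \<not> ae_constant_on_IK K W)"
proof -
  obtain s where s: "s > 0"
    and F: "\<sigma>2 * s\<^sup>2 + q * (s powr q * tent_moment q) - p * (s powr p * tent_moment p) = 0"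
    using fibering_root[of \<sigma>2 "tent_moment q" "tent_moment p" p q]
      assms tent_moment_nonneg tent_moment_pos[of p] by (auto simp: mult_ac)
  define C where "C = 1/2 * \<sigma>2 * s\<^sup>2 + s powr q * tent_moment q - s powr p * tent_moment p"
  define A where "A = (p/2 - 1) * \<sigma>2 * 2 * (\<sigma>2/p) powr (2/(p-2))"
  have A: "A > 0" unfolding A_def using assms by simp
  show ?thesis
  proof (intro exI[of _ "max 2 (p * \<bar>C\<bar> / A + 1)"] allI impI notI)
    fix K W assume K: "max 2 (p * \<bar>C\<bar> / A + 1) \<le> K \<and> 0 < K"
      and min: "is_minimizer_on_MK \<sigma>2 p q K W" and cst: "ae_constant_on_IK K W"
    have K2: "K \<ge> 2" and "p * \<bar>C\<bar> / A < K" using K by auto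
    then have far: "p * \<bar>C\<bar> < K * A" using A by (simp add: pos_divide_less_eq)
    have "LK \<sigma>2 p q K W \<le> C"
      using min bump_in_nehari_set[OF assms(1-3) _ s F, of K] K2
      unfolding is_minimizer_on_MK_def C_def by auto
    then have "p * LK \<sigma>2 p q K W \<le> p * \<bar>C\<bar>"
      using assms(1) by (intro mult_left_mono) auto
    moreover have "K * A \<le> p * LK \<sigma>2 p q K W"
      using constant_energy_lower_bound[OF assms, of K W] K2 min cst
      unfolding is_minimizer_on_MK_def A_def by (simp add: mult_ac)
    ultimately show False using far by linarith
  qed
qed

end
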